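(* Let $G$ be a simple graph on $n$ vertices with $cM_2(G)\ge cM_2(H)$ for every simple graph $H$ on $n$ vertices, and let $F$, $X$, $Y$, $N^-_F$ be as defined in the context. Let $v\in Y$ with $N^-_F(v)\subseteq X$. Then for every $u\in X$ with $uv\in E(G)$, the arc $\overrightarrow{uv}$ belongs to $F$.
   Context: All graphs are finite and simple; $d_G(u)$ is the degree of $u$ and $cM_2(G)=\sum_{uv\in E(G)}|d_G(u)^2-d_G(v)^2|$. The canonical mixed graph $F$ of $G$ has vertex set $V(G)$; for each edge $uv\in E(G)$: if $d_G(u)>d_G(v)$ then $F$ contains the arc $\overrightarrow{uv}$, and if $d_G(u)=d_G(v)$ then $F$ contains the undirected edge $uv$. $d^+_F(u)$ (resp. $d^-_F(u)$) is the number of arcs of $F$ with tail (resp. head) $u$; $N^+_F(u)=\{w:\overrightarrow{uw}\in A(F)\}$ and $N^-_F(u)=\{w:\overrightarrow{wu}\in A(F)\}$. $X=\{u\in V(G): d^+_F(u)\ge d^-_F(u)\}$ and $Y=\{u\in V(G): d^+_F(u)< d^-_F(u)\}$. *)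

theory Defs
  imports Main
begin

text \<open>A finite simple graph: finite vertex set V, edge relation E given as a set of
ordered pairs that is symmetric and irreflexive; the undirected edge uv corresponds
to the two pairs (u,v) and (v,u).\<close>
definition simple_graph :: "'a set \<Rightarrow> ('a \<times> 'a) set \<Rightarrow> bool" where
  "simple_graph V E \<longleftrightarrow> finite V \<and> E \<subseteq> V \<times> V \<and> (\<forall>u v. (u,v) \<in> E \<longrightarrow> (v,u) \<in> E)
     \<and> (\<forall>u. (u,u) \<notin> E)"

definition deg :: "('a \<times> 'a) set \<Rightarrow> 'a \<Rightarrow> nat" where
  "deg E u = card {w. (u,w) \<in> E}"

text \<open>cM_2(G) = sum over (undirected) edges uv of |d(u)^2 - d(v)^2|. Summing over
ordered pairs counts each edge twice, hence the division by 2 (exact).\<close>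
definition cM2 :: "('a \<times> 'a) set \<Rightarrow> int" where
  "cM2 E = (\<Sum>(u,v)\<in>E. \<bar>int (deg E u)^2 - int (deg E v)^2\<bar>) div 2"

definition arcs :: "('a \<times> 'a) set \<Rightarrow> ('a \<times> 'a) set" where
  "arcs E = {(u,v). (u,v) \<in> E \<and> deg E u > deg E v}"

definition outdegF :: "('a \<times> 'a) set \<Rightarrow> 'a \<Rightarrow> nat" where
  "outdegF E u = card {w. (u,w) \<in> arcs E}"

definition indegF :: "('a \<times> 'a) set \<Rightarrow> 'a \<Rightarrow> nat" where
  "indegF E u = card {w. (w,u) \<in> arcs E}"

definition in_nbrF :: "('a \<times> 'a) set \<Rightarrow> 'a \<Rightarrow> 'a set" where
  "in_nbrF E u = {w. (w,u) \<in> arcs E}"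

definition Xset :: "'a set \<Rightarrow> ('a \<times> 'a) set \<Rightarrow> 'a set" where
  "Xset V E = {u\<in>V. outdegF E u \<ge> indegF E u}"

definition Yset :: "'a set \<Rightarrow> ('a \<times> 'a) set \<Rightarrow> 'a set" where
  "Yset V E = {u\<in>V. outdegF E u < indegF E u}"

end

theory Submission
  imports Defs
begin

text \<open>Suppose the arc from \<open>u\<close> to \<open>v\<close> is missing, i.e. \<open>d(u) \<le> d(v)\<close>. Inserting or deleting an
edge \<open>pq\<close> changes \<open>cM\<^sub>2\<close> only at the edges incident to \<open>p\<close> or \<open>q\<close>: every other neighbour
\<open>y\<close> of \<open>p\<close> contributes \<open>\<plusminus>(2 d(p) \<plusminus> 1)\<close>, the sign depending on how \<open>d(y)\<close> compares with
\<open>d(p)\<close>, and the edge \<open>pq\<close> itself contributes \<open>|d(p)\<^sup>2 - d(q)\<^sup>2|\<close>. If an in-neighbour \<open>w\<close> of \<open>v\<close>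
(which lies in \<open>X\<close> and has \<open>d(w) > d(u)\<close>) is not adjacent to \<open>u\<close>, inserting \<open>uw\<close> strictly
increases \<open>cM\<^sub>2\<close>, because a vertex of \<open>X\<close> has at least as many neighbours of smaller degree as
of larger degree. Otherwise \<open>u\<close> is adjacent to every in-neighbour of \<open>v\<close>, and deleting \<open>uv\<close>
strictly increases \<open>cM\<^sub>2\<close>, because \<open>v \<in> Y\<close> has fewer out- than in-neighbours. Either way the
maximality of \<open>cM\<^sub>2(G)\<close> is contradicted.\<close>

lemma simple_graphD:
  assumes "simple_graph V E"
  shows "finite E" "sym E" "irrefl E"
  using assms finite_subset[of E "V \<times> V"] unfolding simple_graph_def sym_def irrefl_def by auto

lemma simple_graph_insert_edge:
  "simple_graph V E \<Longrightarrow> p \<in> V \<Longrightarrow> q \<in> V \<Longrightarrow> p \<noteq> q \<Longrightarrow> simple_graph V (E \<union> {(p,q),(q,p)})"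
  unfolding simple_graph_def by auto

lemma simple_graph_delete_edge: "simple_graph V E \<Longrightarrow> simple_graph V (E - {(p,q),(q,p)})"
  unfolding simple_graph_def by auto

lemma finite_neighbours: "finite E \<Longrightarrow> finite {y. (x,y) \<in> E \<and> P y}"
  by (rule finite_subset[of _ "Range E"]) (auto intro: finite_Range)

lemma finite_in_nbrF: "finite E \<Longrightarrow> finite (in_nbrF E x)"
  unfolding in_nbrF_def arcs_def by (rule finite_subset[of _ "Domain E"]) (auto intro: finite_Domain)

lemma deg_pos: "finite E \<Longrightarrow> (x,y) \<in> E \<Longrightarrow> 0 < deg E x"
  unfolding deg_def using finite_neighbours[of E x "\<lambda>_. True"] by (auto simp: card_gt_0_iff)

lemma card_neighbours_partition:
  assumes "finite E" "(x,z) \<in> E"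
  shows "card {y. (x,y) \<in> E \<and> y \<noteq> z \<and> P y} + card {y. (x,y) \<in> E \<and> y \<noteq> z \<and> \<not> P y} = deg E x - 1"
proof -
  have "{y. (x,y) \<in> E} - {z} = {y. (x,y) \<in> E \<and> y \<noteq> z \<and> P y} \<union> {y. (x,y) \<in> E \<and> y \<noteq> z \<and> \<not> P y}"
    by auto
  then have "card ({y. (x,y) \<in> E} - {z}) = card {y. (x,y) \<in> E \<and> y \<noteq> z \<and> P y} + card {y. (x,y) \<in> E \<and> y \<noteq> z \<and> \<not> P y}"
    by (simp add: card_Un_disjoint finite_neighbours[OF assms(1)] disjoint_iff)
  then show ?thesis using assms by (simp add: deg_def)
qed

lemma sum_symmetric_relation_split:
  fixes f :: "'a \<times> 'a \<Rightarrow> 'b::comm_semiring_1"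
  assumes fin: "finite E" "finite D" and "sym E" and f_sym: "\<And>x y. f (x,y) = f (y,x)"
  shows "sum f E = sum f (Restr E (-D))
           + 2 * (\<Sum>x\<in>D. \<Sum>y\<in>{y. (x,y) \<in> E \<and> y \<notin> D}. f (x,y))
           + sum f (Restr E D)"
proof -
  define E_out where "E_out = E \<inter> (D \<times> (-D))"
  define E_in where "E_in = E \<inter> ((-D) \<times> D)"
  have "E_in = prod.swap ` E_out"
    using \<open>sym E\<close> unfolding E_out_def E_in_def
    by (auto dest: symD intro!: image_eqI[where x = "prod.swap _"])
  then have in_out: "sum f E_in = sum f E_out"
    by (simp add: sum.reindex) (auto intro!: sum.cong simp: f_sym)
  have "E_out = Sigma D (\<lambda>x. {y. (x,y) \<in> E \<and> y \<notin> D})"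
    unfolding E_out_def by auto
  then have out: "sum f E_out = (\<Sum>x\<in>D. \<Sum>y\<in>{y. (x,y) \<in> E \<and> y \<notin> D}. f (x,y))"
    using fin by (simp add: sum.Sigma finite_neighbours)
  have fins: "finite (Restr E (-D))" "finite E_out" "finite E_in" "finite (Restr E D)"
    using fin(1) unfolding E_out_def E_in_def by auto
  have "E = ((Restr E (-D) \<union> E_out) \<union> E_in) \<union> Restr E D"
    unfolding E_out_def E_in_def by auto
  also have "sum f \<dots> = sum f ((Restr E (-D) \<union> E_out) \<union> E_in) + sum f (Restr E D)"
    by (rule sum.union_disjoint) (use fins in \<open>auto simp: E_out_def E_in_def\<close>)
  also have "sum f ((Restr E (-D) \<union> E_out) \<union> E_in) = sum f (Restr E (-D) \<union> E_out) + sum f E_in"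
    by (rule sum.union_disjoint) (use fins in \<open>auto simp: E_out_def E_in_def\<close>)
  also have "sum f (Restr E (-D) \<union> E_out) = sum f (Restr E (-D)) + sum f E_out"
    by (rule sum.union_disjoint) (use fins in \<open>auto simp: E_out_def\<close>)
  finally have "sum f E = sum f (Restr E (-D)) + sum f E_out + sum f E_in + sum f (Restr E D)" .
  then show ?thesis using in_out out by (simp add: algebra_simps mult_2)
qed

lemma abs_square_diff_succ:
  fixes a k :: int
  assumes "0 \<le> a" "0 \<le> k"
  shows "\<bar>(a+1)^2 - k^2\<bar> - \<bar>a^2 - k^2\<bar> = (if k \<le> a then 2*a + 1 else -(2*a + 1))"
proof (cases "k \<le> a")
  case True
  then have "k^2 \<le> a^2" "k^2 \<le> (a+1)^2" using assms by (simp_all add: power_mono)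
  then show ?thesis using True by (simp add: power2_eq_square algebra_simps)
next
  case False
  then have "(a+1)^2 \<le> k^2" "a^2 \<le> k^2" using assms by (simp_all add: power_mono)
  then show ?thesis using False by (simp add: power2_eq_square algebra_simps)
qed

lemma sum_sign_eq_card_diff:
  fixes c :: int
  assumes "finite A"
  shows "(\<Sum>y\<in>A. if P y then c else -c) = c * (int (card {y\<in>A. P y}) - int (card {y\<in>A. \<not> P y}))"
proof -
  have "(\<Sum>y\<in>A. if P y then c else -c) = (\<Sum>y\<in>A \<inter> {y. P y}. c) + (\<Sum>y\<in>A \<inter> - {y. P y}. -c)"
    by (rule sum.If_cases[OF assms])
  moreover have "A \<inter> {y. P y} = {y\<in>A. P y}" "A \<inter> - {y. P y} = {y\<in>A. \<not> P y}" by auto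
  ultimately show ?thesis by (simp add: algebra_simps)
qed

lemma sum_abs_square_gap_succ:
  fixes d d' :: "'a \<Rightarrow> nat"
  assumes "finite A" "d' x = d x + 1" "\<And>y. y \<in> A \<Longrightarrow> d' y = d y"
  shows "(\<Sum>y\<in>A. \<bar>int (d' x)^2 - int (d' y)^2\<bar> - \<bar>int (d x)^2 - int (d y)^2\<bar>)
           = (2 * int (d x) + 1) * (int (card {y\<in>A. d y \<le> d x}) - int (card {y\<in>A. \<not> d y \<le> d x}))"
proof -
  have "(\<Sum>y\<in>A. \<bar>int (d' x)^2 - int (d' y)^2\<bar> - \<bar>int (d x)^2 - int (d y)^2\<bar>)
      = (\<Sum>y\<in>A. if d y \<le> d x then 2 * int (d x) + 1 else -(2 * int (d x) + 1))"
    using assms(2,3) abs_square_diff_succ[of "int (d x)"] by (intro sum.cong) (simp_all add: add.commute)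
  then show ?thesis by (simp add: sum_sign_eq_card_diff[OF assms(1)])
qed

lemma deg_insert_edge:
  assumes "finite E" "sym E" "(p,q) \<notin> E" "p \<noteq> q"
  shows "deg (E \<union> {(p,q),(q,p)}) p = deg E p + 1"
    and "deg (E \<union> {(p,q),(q,p)}) q = deg E q + 1"
    and "x \<noteq> p \<Longrightarrow> x \<noteq> q \<Longrightarrow> deg (E \<union> {(p,q),(q,p)}) x = deg E x"
proof -
  have "(q,p) \<notin> E" using assms(2,3) by (auto dest: symD)
  have "{y. (p,y) \<in> E \<union> {(p,q),(q,p)}} = insert q {y. (p,y) \<in> E}"
    "{y. (q,y) \<in> E \<union> {(p,q),(q,p)}} = insert p {y. (q,y) \<in> E}" using assms(4) by auto
  then show "deg (E \<union> {(p,q),(q,p)}) p = deg E p + 1" "deg (E \<union> {(p,q),(q,p)}) q = deg E q + 1"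
    unfolding deg_def using assms(1,3) \<open>(q,p) \<notin> E\<close> finite_neighbours[of E _ "\<lambda>_. True"] by simp_all
  show "x \<noteq> p \<Longrightarrow> x \<noteq> q \<Longrightarrow> deg (E \<union> {(p,q),(q,p)}) x = deg E x"
    unfolding deg_def by (rule arg_cong[where f = card]) auto
qed

definition cM2_ordered :: "('a \<times> 'a) set \<Rightarrow> int" where
  "cM2_ordered E = (\<Sum>(u,v)\<in>E. \<bar>int (deg E u)^2 - int (deg E v)^2\<bar>)"

lemma cM2_less_if_cM2_ordered_diff:
  "cM2_ordered H - cM2_ordered E = 2 * g \<Longrightarrow> 0 < g \<Longrightarrow> cM2 E < cM2 H"
  unfolding cM2_def cM2_ordered_def by linarith

definition degree_balance :: "('a \<times> 'a) set \<Rightarrow> 'a \<Rightarrow> int" where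
  "degree_balance E x = int (card {y. (x,y) \<in> E \<and> deg E y \<le> deg E x})
                      - int (card {y. (x,y) \<in> E \<and> deg E x < deg E y})"

lemma cM2_ordered_insert_edge:
  assumes fin: "finite E" and "sym E" "irrefl E" and pq: "(p,q) \<notin> E" "p \<noteq> q"
  shows "cM2_ordered (E \<union> {(p,q),(q,p)}) - cM2_ordered E =
           2 * ((2 * int (deg E p) + 1) * degree_balance E p
              + (2 * int (deg E q) + 1) * degree_balance E q
              + \<bar>(int (deg E p) + 1)^2 - (int (deg E q) + 1)^2\<bar>)"
proof -
  define H where "H = E \<union> {(p,q),(q,p)}"
  define f where "f G = (\<lambda>(u,v). \<bar>int (deg G u)^2 - int (deg G v)^2\<bar>)" for G :: "('a \<times> 'a) set"
  have f_sym: "f G (x,y) = f G (y,x)" for G x y by (simp add: f_def abs_minus_commute)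
  note deg_H = deg_insert_edge[OF fin \<open>sym E\<close> pq, folded H_def]
  have "sym H" using \<open>sym E\<close> unfolding H_def sym_def by auto
  have "finite H" using fin unfolding H_def by simp
  have nbrs: "{y. (x,y) \<in> G \<and> y \<notin> {p,q}} = {y. (x,y) \<in> E}" if "x \<in> {p,q}" "G \<in> {E, H}" for x G
    using that pq \<open>irrefl E\<close> \<open>sym E\<close> unfolding H_def irrefl_def by (auto dest: symD)
  have "Restr H (-{p,q}) = Restr E (-{p,q})" unfolding H_def by auto
  then have outside: "sum (f H) (Restr H (-{p,q})) = sum (f E) (Restr E (-{p,q}))"
  proof (rule sum.cong)
    fix e assume "e \<in> Restr E (-{p,q})"
    then obtain x y where "e = (x,y)" "x \<notin> {p,q}" "y \<notin> {p,q}" by auto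
    then show "f H e = f E e" by (simp add: f_def deg_H(3))
  qed
  have restr: "Restr H {p,q} = {(p,q),(q,p)}" "Restr E {p,q} = {}"
    using pq \<open>irrefl E\<close> \<open>sym E\<close> unfolding H_def irrefl_def by (auto dest: symD)
  have inside: "sum (f H) (Restr H {p,q}) - sum (f E) (Restr E {p,q})
      = 2 * \<bar>(int (deg E p) + 1)^2 - (int (deg E q) + 1)^2\<bar>"
    using pq(2) by (simp only: restr) (simp add: f_sym[of H q p], simp add: f_def deg_H add.commute)
  have gain: "(\<Sum>y\<in>{y. (x,y) \<in> E}. f H (x,y)) - (\<Sum>y\<in>{y. (x,y) \<in> E}. f E (x,y))
      = (2 * int (deg E x) + 1) * degree_balance E x" if "x \<in> {p,q}" for x
  proof -
    have "deg H y = deg E y" if "(x,y) \<in> E" for y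
      using nbrs[OF \<open>x \<in> {p,q}\<close>, of E] that deg_H(3) by blast
    then show ?thesis
      using sum_abs_square_gap_succ[OF finite_neighbours[OF fin, of x "\<lambda>_. True"], of "deg H" x "deg E"]
        \<open>x \<in> {p,q}\<close> deg_H(1,2)
      by (auto simp: f_def sum_subtractf degree_balance_def not_le)
  qed
  have split: "sum (f G) G = sum (f G) (Restr G (-{p,q}))
      + 2 * ((\<Sum>y\<in>{y. (p,y) \<in> E}. f G (p,y)) + (\<Sum>y\<in>{y. (q,y) \<in> E}. f G (q,y)))
      + sum (f G) (Restr G {p,q})" if "G \<in> {E, H}" for G
  proof -
    have "finite G" "sym G" using that fin \<open>finite H\<close> \<open>sym E\<close> \<open>sym H\<close> by auto
    then show ?thesis
      using sum_symmetric_relation_split[of G "{p,q}" "f G"] nbrs[OF _ that] pq(2) f_sym by simp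
  qed
  have "cM2_ordered H - cM2_ordered E = sum (f H) H - sum (f E) E"
    unfolding cM2_ordered_def f_def ..
  also have "\<dots> = 2 * ((2 * int (deg E p) + 1) * degree_balance E p
              + (2 * int (deg E q) + 1) * degree_balance E q
              + \<bar>(int (deg E p) + 1)^2 - (int (deg E q) + 1)^2\<bar>)"
    using split[of E] split[of H] outside inside gain[of p] gain[of q] by simp
  finally show ?thesis unfolding H_def .
qed

lemma outdegF_eq: "outdegF E x = card {y. (x,y) \<in> E \<and> deg E y < deg E x}"
  unfolding outdegF_def arcs_def by simp

lemma indegF_eq: "sym E \<Longrightarrow> indegF E x = card {y. (x,y) \<in> E \<and> deg E x < deg E y}"
  unfolding indegF_def arcs_def by (metis (no_types, lifting) symD case_prod_conv mem_Collect_eq)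

lemma degree_balance_ge_outdegF_minus_indegF:
  assumes "finite E" "sym E"
  shows "int (outdegF E x) - int (indegF E x) \<le> degree_balance E x"
proof -
  have "outdegF E x \<le> card {y. (x,y) \<in> E \<and> deg E y \<le> deg E x}"
    unfolding outdegF_eq by (rule card_mono) (auto intro: finite_neighbours[OF assms(1)])
  then show ?thesis unfolding degree_balance_def indegF_eq[OF assms(2)] by linarith
qed

lemma cM2_less_insert_edge:
  assumes "finite E" "sym E" "irrefl E" "(p,q) \<notin> E" "p \<noteq> q"
    and "indegF E p \<le> outdegF E p" "indegF E q \<le> outdegF E q" and "deg E p \<noteq> deg E q"
  shows "cM2 E < cM2 (E \<union> {(p,q),(q,p)})"
proof (rule cM2_less_if_cM2_ordered_diff[OF cM2_ordered_insert_edge[OF assms(1-5)]])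
  have "0 \<le> degree_balance E p" "0 \<le> degree_balance E q"
    using degree_balance_ge_outdegF_minus_indegF[OF assms(1,2), of p]
      degree_balance_ge_outdegF_minus_indegF[OF assms(1,2), of q] assms(6,7) by linarith+
  then have "0 \<le> (2 * int (deg E p) + 1) * degree_balance E p"
    "0 \<le> (2 * int (deg E q) + 1) * degree_balance E q" by simp_all
  moreover have "(int (deg E p) + 1)^2 \<noteq> (int (deg E q) + 1)^2"
    using assms(8) by (simp add: power2_eq_iff_nonneg)
  ultimately show "0 < (2 * int (deg E p) + 1) * degree_balance E p + (2 * int (deg E q) + 1) * degree_balance E q
      + \<bar>(int (deg E p) + 1)^2 - (int (deg E q) + 1)^2\<bar>"
    by linarith
qed

lemma deg_delete_edge:
  assumes "finite E" "sym E" "irrefl E" "(p,q) \<in> E"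
  shows "deg E p = deg (E - {(p,q),(q,p)}) p + 1"
    and "deg E q = deg (E - {(p,q),(q,p)}) q + 1"
    and "x \<noteq> p \<Longrightarrow> x \<noteq> q \<Longrightarrow> deg (E - {(p,q),(q,p)}) x = deg E x"
proof -
  define E' where "E' = E - {(p,q),(q,p)}"
  have "E = E' \<union> {(p,q),(q,p)}" "p \<noteq> q"
    using assms(2-4) unfolding E'_def irrefl_def by (auto dest: symD)
  moreover have "finite E'" "sym E'" "(p,q) \<notin> E'"
    using assms(1,2) unfolding E'_def sym_def by auto
  ultimately show "deg E p = deg E' p + 1" "deg E q = deg E' q + 1"
    "x \<noteq> p \<Longrightarrow> x \<noteq> q \<Longrightarrow> deg E' x = deg E x"
    using deg_insert_edge[of E' p q] by auto
qed

lemma cM2_ordered_delete_edge: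
  assumes "finite E" "sym E" "irrefl E" "(p,q) \<in> E"
  shows "cM2_ordered E - cM2_ordered (E - {(p,q),(q,p)}) =
           2 * ((2 * int (deg E p) - 1) * degree_balance (E - {(p,q),(q,p)}) p
              + (2 * int (deg E q) - 1) * degree_balance (E - {(p,q),(q,p)}) q
              + \<bar>int (deg E p)^2 - int (deg E q)^2\<bar>)"
proof -
  define E' where "E' = E - {(p,q),(q,p)}"
  have "E = E' \<union> {(p,q),(q,p)}" "p \<noteq> q"
    using assms(2-4) unfolding E'_def irrefl_def by (auto dest: symD)
  moreover have "finite E'" "sym E'" "irrefl E'" "(p,q) \<notin> E'"
    using assms(1-3) unfolding E'_def sym_def irrefl_def by auto
  moreover note deg_delete_edge[OF assms, folded E'_def]
  ultimately show ?thesis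
    using cM2_ordered_insert_edge[of E' p q] unfolding E'_def[symmetric] by (simp add: algebra_simps)
qed

lemma degree_balance_delete_edge:
  assumes "finite E" "sym E" "irrefl E" "(p,q) \<in> E"
  shows "degree_balance (E - {(p,q),(q,p)}) p =
           int (card {y. (p,y) \<in> E \<and> y \<noteq> q \<and> deg E y < deg E p})
         - int (card {y. (p,y) \<in> E \<and> y \<noteq> q \<and> deg E p \<le> deg E y})"
proof -
  define E' where "E' = E - {(p,q),(q,p)}"
  note deg' = deg_delete_edge[OF assms, folded E'_def]
  have "(p,p) \<notin> E" using assms(3) unfolding irrefl_def by blast
  then have nbr: "(p,y) \<in> E' \<longleftrightarrow> (p,y) \<in> E \<and> y \<noteq> q" for y
    unfolding E'_def by auto
  have deg_nbr: "deg E' y = deg E y" if "(p,y) \<in> E" "y \<noteq> q" for y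
    using deg'(3) that \<open>(p,p) \<notin> E\<close> by fastforce
  have "{y. (p,y) \<in> E' \<and> deg E' y \<le> deg E' p} = {y. (p,y) \<in> E \<and> y \<noteq> q \<and> deg E y < deg E p}"
    "{y. (p,y) \<in> E' \<and> deg E' p < deg E' y} = {y. (p,y) \<in> E \<and> y \<noteq> q \<and> deg E p \<le> deg E y}"
    unfolding nbr using deg_nbr deg'(1) by auto
  then show ?thesis unfolding degree_balance_def E'_def by simp
qed

text \<open>In the application \<open>lu\<close>, \<open>gu\<close> count the neighbours of \<open>u\<close> other than \<open>v\<close> of degree
\<open>< d(u)\<close> and \<open>\<ge> d(u)\<close>, \<open>lv\<close>, \<open>gv\<close> those of \<open>v\<close> other than \<open>u\<close>, and \<open>l\<close>, \<open>s\<close> are the in- and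
out-degree of \<open>v\<close> in \<open>F\<close>.\<close>
lemma deletion_gain_negative:
  fixes a b lu gu lv gv s l :: int
  assumes "lu + gu = a - 1" "lv + gv = b - 1" "l \<le> gu" "0 \<le> lv" "lv \<le> s" "s < l" "1 \<le> a" "a \<le> b"
    and "a < b \<Longrightarrow> l + 1 \<le> lu \<and> lv + 1 \<le> s"
  shows "(2*a - 1) * (lu - gu) + (2*b - 1) * (lv - gv) + \<bar>a^2 - b^2\<bar> \<le> -1"
proof (cases "a = b")
  case True
  have "(2*a - 1) * (lu - gu + (lv - gv)) \<le> (2*a - 1) * -2"
    by (rule mult_left_mono) (use assms True in linarith)+
  then have "(2*a - 1) * (lu - gu + (lv - gv)) \<le> -1" using assms(7) by (simp add: algebra_simps)
  then show ?thesis using True by (simp add: algebra_simps)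
next
  case False
  with assms have "a < b" "l + 1 \<le> lu" "lv + 1 \<le> s" by auto
  then have "2*l + 2 \<le> a" using assms by linarith
  have "(2*a - 1) * (lu - gu) \<le> (2*a - 1) * (a - 1 - 2*l)"
    by (rule mult_left_mono) (use assms \<open>l + 1 \<le> lu\<close> in linarith)+
  moreover have "(2*b - 1) * (lv - gv) \<le> (2*b - 1) * (2*l - b - 3)"
    by (rule mult_left_mono) (use assms \<open>lv + 1 \<le> s\<close> in linarith)+
  moreover have "\<bar>a^2 - b^2\<bar> = b^2 - a^2"
    using \<open>a < b\<close> assms(7) by (simp add: power_mono)
  moreover have "(2*a - 1) * (a - 1 - 2*l) + (2*b - 1) * (2*l - b - 3) + (b^2 - a^2)
      = - ((b - a) * (a + b - 4*l) + 3*a + 5*b - 4)"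
    by (simp add: power2_eq_square algebra_simps)
  moreover have "0 \<le> (b - a) * (a + b - 4*l)"
    using \<open>a < b\<close> \<open>2*l + 2 \<le> a\<close> by simp
  ultimately show ?thesis using assms(7,8) by linarith
qed

lemma indegF_less_outdegF_if_adjacent_to_in_nbrF:
  assumes fin: "finite E" and "sym E" "irrefl E" and uv: "(u,v) \<in> E" "deg E u < deg E v"
    and in_v: "in_nbrF E v \<subseteq> {w. (u,w) \<in> E}" and u_bal: "indegF E u \<le> outdegF E u"
  shows "indegF E v < outdegF E u"
proof -
  have "v \<notin> in_nbrF E v" using \<open>irrefl E\<close> unfolding in_nbrF_def arcs_def irrefl_def by auto
  have "insert v (in_nbrF E v) \<subseteq> {y. (u,y) \<in> E \<and> deg E u < deg E y}"
    using uv in_v unfolding in_nbrF_def arcs_def by auto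
  then have "card (insert v (in_nbrF E v)) \<le> indegF E u"
    unfolding indegF_eq[OF \<open>sym E\<close>] by (intro card_mono) (auto intro: finite_neighbours[OF fin])
  then show ?thesis
    using u_bal \<open>v \<notin> in_nbrF E v\<close> finite_in_nbrF[OF fin]
    unfolding indegF_def in_nbrF_def[symmetric] by simp
qed

lemma cM2_less_delete_edge:
  assumes fin: "finite E" and "sym E" "irrefl E" and uv: "(u,v) \<in> E" and "deg E u \<le> deg E v"
    and u_bal: "indegF E u \<le> outdegF E u" and v_bal: "outdegF E v < indegF E v"
    and in_v: "in_nbrF E v \<subseteq> {w. (u,w) \<in> E}"
  shows "cM2 E < cM2 (E - {(u,v),(v,u)})"
proof -
  have "(v,u) \<in> E" using \<open>sym E\<close> uv by (rule symD)
  define E' where "E' = E - {(u,v),(v,u)}"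
  define Lu where "Lu = {y. (u,y) \<in> E \<and> y \<noteq> v \<and> deg E y < deg E u}"
  define Gu where "Gu = {y. (u,y) \<in> E \<and> y \<noteq> v \<and> deg E u \<le> deg E y}"
  define Lv where "Lv = {y. (v,y) \<in> E \<and> y \<noteq> u \<and> deg E y < deg E v}"
  define Gv where "Gv = {y. (v,y) \<in> E \<and> y \<noteq> u \<and> deg E v \<le> deg E y}"
  have bal_u: "degree_balance E' u = int (card Lu) - int (card Gu)"
    using degree_balance_delete_edge[OF fin \<open>sym E\<close> \<open>irrefl E\<close> uv] unfolding E'_def Lu_def Gu_def .
  have bal_v: "degree_balance E' v = int (card Lv) - int (card Gv)"
    using degree_balance_delete_edge[OF fin \<open>sym E\<close> \<open>irrefl E\<close> \<open>(v,u) \<in> E\<close>]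
    unfolding E'_def Lv_def Gv_def insert_commute[of "(v,u)"] .
  have card_u: "card Lu + card Gu = deg E u - 1" and card_v: "card Lv + card Gv = deg E v - 1"
    using card_neighbours_partition[OF fin uv, of "\<lambda>y. deg E y < deg E u"]
      card_neighbours_partition[OF fin \<open>(v,u) \<in> E\<close>, of "\<lambda>y. deg E y < deg E v"]
    unfolding Lu_def Gu_def Lv_def Gv_def not_less .
  have "0 < deg E u" "0 < deg E v" using deg_pos[OF fin] uv \<open>(v,u) \<in> E\<close> by auto
  have "in_nbrF E v \<subseteq> Gu"
    using in_v \<open>deg E u \<le> deg E v\<close> unfolding in_nbrF_def arcs_def Gu_def by auto
  then have "indegF E v \<le> card Gu"
    unfolding indegF_def in_nbrF_def[symmetric] Gu_def
    by (intro card_mono) (auto intro: finite_neighbours[OF fin])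
  have "card Lv \<le> outdegF E v"
    unfolding outdegF_eq Lv_def by (intro card_mono) (auto intro: finite_neighbours[OF fin])
  have strict: "indegF E v + 1 \<le> card Lu \<and> card Lv + 1 \<le> outdegF E v" if "deg E u < deg E v"
  proof
    have "outdegF E u = card Lu"
      unfolding outdegF_eq Lu_def using that by (intro arg_cong[where f = card]) auto
    then show "indegF E v + 1 \<le> card Lu"
      using indegF_less_outdegF_if_adjacent_to_in_nbrF[OF fin \<open>sym E\<close> \<open>irrefl E\<close> uv that in_v u_bal]
      by simp
    have "u \<notin> Lv" "insert u Lv \<subseteq> {y. (v,y) \<in> E \<and> deg E y < deg E v}"
      using \<open>(v,u) \<in> E\<close> that unfolding Lv_def by auto
    then have "card (insert u Lv) \<le> outdegF E v"
      unfolding outdegF_eq by (intro card_mono) (auto intro: finite_neighbours[OF fin])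
    then show "card Lv + 1 \<le> outdegF E v"
      using \<open>u \<notin> Lv\<close> finite_neighbours[OF fin] unfolding Lv_def by simp
  qed
  have "(2 * int (deg E u) - 1) * degree_balance E' u + (2 * int (deg E v) - 1) * degree_balance E' v
      + \<bar>int (deg E u)^2 - int (deg E v)^2\<bar> \<le> -1"
    unfolding bal_u bal_v
  proof (rule deletion_gain_negative[where l = "int (indegF E v)" and s = "int (outdegF E v)"])
    show "int (card Lu) + int (card Gu) = int (deg E u) - 1" "int (card Lv) + int (card Gv) = int (deg E v) - 1"
      using card_u card_v \<open>0 < deg E u\<close> \<open>0 < deg E v\<close> by linarith+
    show "int (deg E u) < int (deg E v) \<Longrightarrow>
        int (indegF E v) + 1 \<le> int (card Lu) \<and> int (card Lv) + 1 \<le> int (outdegF E v)"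
      using strict by simp
  qed (use \<open>indegF E v \<le> card Gu\<close> \<open>card Lv \<le> outdegF E v\<close> v_bal \<open>0 < deg E u\<close>
      \<open>deg E u \<le> deg E v\<close> in simp_all)
  then show ?thesis
    using cM2_ordered_delete_edge[OF fin \<open>sym E\<close> \<open>irrefl E\<close> uv, folded E'_def]
    unfolding E'_def[symmetric]
    by (intro cM2_less_if_cM2_ordered_diff[where g = "-((2 * int (deg E u) - 1) * degree_balance E' u
      + (2 * int (deg E v) - 1) * degree_balance E' v + \<bar>int (deg E u)^2 - int (deg E v)^2\<bar>)"]) simp_all
qed

theorem claim3:
  fixes V :: "'a set" and E :: "('a \<times> 'a) set" and u v :: 'a
  assumes G: "simple_graph V E"
    and maximal: "\<And>H. simple_graph V H \<Longrightarrow> cM2 H \<le> cM2 E"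
    and vY: "v \<in> Yset V E"
    and Nv: "in_nbrF E v \<subseteq> Xset V E"
    and uX: "u \<in> Xset V E"
    and uv: "(u,v) \<in> E"
  shows "(u,v) \<in> arcs E"
proof (rule ccontr)
  assume "(u,v) \<notin> arcs E"
  then have "deg E u \<le> deg E v" using uv unfolding arcs_def by auto
  note E = simple_graphD[OF G]
  consider w where "w \<in> in_nbrF E v" "(u,w) \<notin> E" | "in_nbrF E v \<subseteq> {w. (u,w) \<in> E}" by blast
  then show False
  proof cases
    case (1 w)
    then have "w \<in> Xset V E" "deg E v < deg E w"
      using Nv unfolding in_nbrF_def arcs_def by auto
    then have "deg E u \<noteq> deg E w" "u \<noteq> w" using \<open>deg E u \<le> deg E v\<close> by auto
    then have "cM2 E < cM2 (E \<union> {(u,w),(w,u)})"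
      using cM2_less_insert_edge[OF E(1-3) \<open>(u,w) \<notin> E\<close>] uX \<open>w \<in> Xset V E\<close>
      unfolding Xset_def by auto
    moreover have "simple_graph V (E \<union> {(u,w),(w,u)})"
      using simple_graph_insert_edge[OF G] uX \<open>w \<in> Xset V E\<close> \<open>u \<noteq> w\<close>
      unfolding Xset_def by auto
    ultimately show False using maximal by fastforce
  next
    case 2
    then have "cM2 E < cM2 (E - {(u,v),(v,u)})"
      using cM2_less_delete_edge[OF E(1-3) uv \<open>deg E u \<le> deg E v\<close>] uX vY
      unfolding Xset_def Yset_def by auto
    then show False using maximal[OF simple_graph_delete_edge[OF G, of u v]] by simp
  qed
qed

end
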